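(* Assume $\mu>0$. Let $\alpha\in(0,1)$, $c\in(0,1)$, $C\ge0$, and set $\alpha^k\equiv\alpha$. Let $\psi_i^k,\epsilon_i^k,\tilde x_i^k,\epsilon_{\psi,i}^k$ ($k\ge0$, $i\in[m]$) be random objects on a common probability space such that, almost surely, $(\{\psi_i^k\},\{\alpha^k\},\{\epsilon_i^k\})$ is an inexact estimating sequence, $\epsilon_{\psi,i}^0=0$ and $M(\tilde x_i^k)\le\min_x\psi_i^k(x)+\epsilon_{\psi,i}^k$ for all $k,i$; assume $\psi_i^0$ is deterministic and all expectations below are finite. With $\epsilon_{tot,i}^k:=\epsilon_{\psi,i}^{k+1}-(1-\alpha)\epsilon_{\psi,i}^k+\alpha\epsilon_i^k$, suppose $$\frac1m\sum_{i=1}^m\mathbb{E}\big[|\epsilon_{tot,i}^k|\big]\le C(1-c\alpha)^k\quad\forall k\ge0.$$ Then for all $k\ge0$, $$\frac1m\sum_{i=1}^m\mathbb{E}\big[\|\tilde x_i^k-x^\star\|^2\big]\le c_{scvx}(1-c\alpha)^k,\qquad c_{scvx}:=\frac1m\sum_{i=1}^m\frac{2}{\mu_M}\Big(\psi_i^0(x^\star)-M^\star+\frac{C}{\alpha(1-c)}\Big).$$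
   Context: Setting: $u=f+r$ on $\mathbb{R}^d$ with $f=\frac1m\sum_{i=1}^m f_i$, each $f_i$ continuously differentiable and convex, $f$ $\mu$-strongly convex and $L$-smooth, $r$ proper closed convex; $x^\star$ is the minimizer of $u$. Fix $\delta>0$. $M(x):=\min_y\{u(y)+\frac\delta2\|y-x\|^2\}$ (Moreau envelope; $\delta$-smooth and $\mu_M$-strongly convex with $\mu_M:=\delta\mu/(\delta+\mu)$), $M^\star:=\min M=u(x^\star)$. Definition (inexact estimating sequence): functions $\psi_i^k:\mathbb{R}^d\to\mathbb{R}$ (each attaining its minimum), numbers $\alpha^k$ and reals $\epsilon_i^k$ ($k\ge0$, $i\in[m]$) such that (i) $\alpha^k\in(0,1)$ and $\prod_{t=0}^k(1-\alpha^t)\to0$; (ii) $\psi_i^{k+1}(x^\star)\le(1-\alpha^k)\psi_i^k(x^\star)+\alpha^k(M^\star+\epsilon_i^k)$ for all $k,i$. *)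

theory Defs
  imports "HOL-Analysis.Analysis" "HOL-Probability.Probability"
begin

definition proper_fun :: "('a \<Rightarrow> ereal) \<Rightarrow> bool" where
  "proper_fun r \<longleftrightarrow> (\<forall>x. r x \<noteq> -\<infinity>) \<and> (\<exists>x. r x \<noteq> \<infinity>)"

definition closed_fun :: "('a::topological_space \<Rightarrow> ereal) \<Rightarrow> bool" where
  "closed_fun r \<longleftrightarrow> closed {(x, t::real). r x \<le> ereal t}"

definition convex_efun :: "('a::real_vector \<Rightarrow> ereal) \<Rightarrow> bool" where
  "convex_efun r \<longleftrightarrow> (\<forall>x y t. 0 \<le> t \<and> t \<le> 1 \<longrightarrow>
      r ((1 - t) *\<^sub>R x + t *\<^sub>R y) \<le> ereal (1 - t) * r x + ereal t * r y)"

definition strongly_convex :: "real \<Rightarrow> ('a::real_normed_vector \<Rightarrow> real) \<Rightarrow> bool" where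
  "strongly_convex \<mu> f \<longleftrightarrow> (\<forall>x y t. 0 \<le> t \<and> t \<le> 1 \<longrightarrow>
      f ((1 - t) *\<^sub>R x + t *\<^sub>R y) \<le> (1 - t) * f x + t * f y - \<mu> / 2 * t * (1 - t) * (norm (x - y))\<^sup>2)"

definition cont_diff :: "('a::euclidean_space \<Rightarrow> real) \<Rightarrow> bool" where
  "cont_diff f \<longleftrightarrow> (\<exists>g. continuous_on UNIV g \<and> (\<forall>x. (f has_derivative (\<lambda>h. g x \<bullet> h)) (at x)))"

definition L_smooth :: "real \<Rightarrow> ('a::euclidean_space \<Rightarrow> real) \<Rightarrow> bool" where
  "L_smooth L f \<longleftrightarrow> (\<exists>g. (\<forall>x. (f has_derivative (\<lambda>h. g x \<bullet> h)) (at x)) \<and>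
      (\<forall>x y. norm (g x - g y) \<le> L * norm (x - y)))"

definition moreau :: "real \<Rightarrow> ('a::real_normed_vector \<Rightarrow> ereal) \<Rightarrow> 'a \<Rightarrow> real" where
  "moreau \<delta> u x = real_of_ereal (INF y. u y + ereal (\<delta> / 2 * (norm (y - x))\<^sup>2))"

definition inexact_est_seq ::
  "nat \<Rightarrow> 'a \<Rightarrow> real \<Rightarrow> (nat \<Rightarrow> nat \<Rightarrow> 'a \<Rightarrow> real) \<Rightarrow> (nat \<Rightarrow> real) \<Rightarrow> (nat \<Rightarrow> nat \<Rightarrow> real) \<Rightarrow> bool" where
  "inexact_est_seq m xs Ms \<psi> \<alpha> \<epsilon> \<longleftrightarrow>
     (\<forall>k. \<forall>i<m. \<exists>x. \<forall>y. \<psi> k i x \<le> \<psi> k i y) \<and>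
     (\<forall>k. 0 < \<alpha> k \<and> \<alpha> k < 1) \<and>
     (\<lambda>k. \<Prod>t\<le>k. 1 - \<alpha> t) \<longlonglongrightarrow> 0 \<and>
     (\<forall>k. \<forall>i<m. \<psi> (Suc k) i xs \<le> (1 - \<alpha> k) * \<psi> k i xs + \<alpha> k * (Ms + \<epsilon> k i))"

end

theory Submission
  imports Defs
begin

(*
  Strong convexity gives u quadratic growth around its minimizer x\<^sup>\<star>, and the triangle
  inequality combines it with the proximal term into M x \<ge> M\<^sup>\<star> + \<mu>M/2 ||x - x\<^sup>\<star>||^2. Hence
  \<mu>M/2 ||x_i^k - x\<^sup>\<star>||^2 \<le> \<psi>_i^k(x\<^sup>\<star>) - M\<^sup>\<star> + \<epsilon>_\<psi>_i^k, and by the estimating-sequence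
  inequality this gap obeys gap(k+1) \<le> (1 - \<alpha>) gap(k) + \<epsilon>_tot_i^k. Unrolling the recursion with
  |\<epsilon>_tot| in place of \<epsilon>_tot gives a pathwise majorant that is linear in the errors, so its
  expectation satisfies the same recursion with errors bounded by C (1 - c\<alpha>)^k; since
  1 - \<alpha> < 1 - c\<alpha>, it is bounded by (1 - c\<alpha>)^k (gap(0) + C / (\<alpha> (1 - c))).
*)

fun lin_rec :: "real \<Rightarrow> real \<Rightarrow> (nat \<Rightarrow> real) \<Rightarrow> nat \<Rightarrow> real" where
  "lin_rec p a e 0 = a"
| "lin_rec p a e (Suc k) = p * lin_rec p a e k + e k"

lemma le_lin_rec:
  fixes x :: "nat \<Rightarrow> real"
  assumes "\<And>k. x (Suc k) \<le> p * x k + e k" "x 0 \<le> a" "0 \<le> p"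
  shows "x k \<le> lin_rec p a e k"
proof (induction k)
  case 0 then show ?case using assms(2) by simp
next
  case (Suc k)
  have "x (Suc k) \<le> p * x k + e k" by (rule assms(1))
  also have "\<dots> \<le> p * lin_rec p a e k + e k"
    using Suc.IH assms(3) by (simp add: mult_left_mono)
  finally show ?case by simp
qed

lemma lin_rec_le_geometric:
  assumes "0 \<le> p" "p < q" "0 \<le> a" "0 \<le> C" "\<And>j. e j \<le> C * q ^ j"
  shows "lin_rec p a e k \<le> q ^ k * (a + C / (q - p))"
proof (induction k)
  case 0 then show ?case using assms by simp
next
  case (Suc k)
  have "lin_rec p a e (Suc k) \<le> p * (q ^ k * (a + C / (q - p))) + C * q ^ k"
    using Suc.IH assms(1,5) by (simp add: add_mono mult_left_mono)
  also have "\<dots> = q ^ Suc k * (a + C / (q - p)) - (q - p) * q ^ k * a"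
    using assms(2) by (simp add: field_simps)
  also have "\<dots> \<le> q ^ Suc k * (a + C / (q - p))"
    using assms by simp
  finally show ?case .
qed

lemma sum_lin_rec:
  "(\<Sum>i\<in>I. lin_rec p (a i) (e i) k) = lin_rec p (\<Sum>i\<in>I. a i) (\<lambda>j. \<Sum>i\<in>I. e i j) k"
  by (induction k) (simp_all add: sum.distrib sum_distrib_left[symmetric])

lemma (in prob_space) integrable_lin_rec:
  assumes "\<And>j. integrable M (e j)"
  shows "integrable M (\<lambda>w. lin_rec p a (\<lambda>j. e j w) k)"
  by (induction k) (simp_all add: assms)

lemma (in prob_space) integral_lin_rec:
  assumes "\<And>j. integrable M (e j)"
  shows "(\<integral>w. lin_rec p a (\<lambda>j. e j w) k \<partial>M) = lin_rec p a (\<lambda>j. \<integral>w. e j w \<partial>M) k"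
  by (induction k) (simp_all add: assms integrable_lin_rec prob_space)

lemma le_diff_of_forall_weight:
  fixes x y K :: real
  assumes "\<And>t. 0 < t \<Longrightarrow> t \<le> 1 \<Longrightarrow> x \<le> y - K * (1 - t)"
  shows "x \<le> y - K"
proof (rule field_le_epsilon)
  fix e :: real assume e: "0 < e"
  show "x \<le> y - K + e"
  proof (cases "K \<le> 0")
    case True then show ?thesis using assms[of 1] e by simp
  next
    case False
    define t where "t = min 1 (e / K)"
    have "0 < t" "t \<le> 1" "K * t \<le> e" using False e by (auto simp: t_def min_def field_simps)
    then show ?thesis using assms[of t] by (simp add: algebra_simps)
  qed
qed

lemma proper_sum_minimum_finite:
  fixes f :: "'a \<Rightarrow> real" and r :: "'a \<Rightarrow> ereal"
  assumes "proper_fun r" "\<forall>y. ereal (f xs) + r xs \<le> ereal (f y) + r y"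
  shows "\<exists>a. r xs = ereal a"
proof -
  obtain x0 where "r x0 \<noteq> \<infinity>" "r x0 \<noteq> -\<infinity>" using assms(1) unfolding proper_fun_def by blast
  then obtain c where "r x0 = ereal c" by (cases "r x0") auto
  then have "ereal (f xs) + r xs \<noteq> \<infinity>" using assms(2)[rule_format, of x0] by auto
  then have "r xs \<noteq> \<infinity>" by auto
  moreover have "r xs \<noteq> -\<infinity>" using assms(1) unfolding proper_fun_def by blast
  ultimately show ?thesis by (cases "r xs") auto
qed

lemma strongly_convex_quadratic_growth:
  fixes f :: "'a::real_normed_vector \<Rightarrow> real" and r :: "'a \<Rightarrow> ereal"
  assumes sc: "strongly_convex \<mu> f" and cv: "convex_efun r" and pr: "proper_fun r"
    and min: "\<forall>y. ereal (f xs) + r xs \<le> ereal (f y) + r y" and a: "r xs = ereal a"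
  shows "ereal (f xs + a + \<mu> / 2 * (norm (y - xs))\<^sup>2) \<le> ereal (f y) + r y"
proof (cases "r y")
  case (real b)
  define d where "d = (norm (y - xs))\<^sup>2"
  have "f xs + a \<le> f y + b - \<mu> / 2 * d * (1 - t)" if t: "0 < t" "t \<le> 1" for t
  proof -
    define z where "z = (1 - t) *\<^sub>R xs + t *\<^sub>R y"
    have fz: "f z \<le> (1 - t) * f xs + t * f y - \<mu> / 2 * t * (1 - t) * d"
      using sc t unfolding strongly_convex_def z_def d_def by (auto simp: norm_minus_commute)
    have "r z \<le> ereal (1 - t) * r xs + ereal t * r y"
      using cv t unfolding convex_efun_def z_def by simp
    then have rz: "r z \<le> ereal ((1 - t) * a + t * b)" using a real by simp
    obtain c where c: "r z = ereal c"
      using rz pr unfolding proper_fun_def by (cases "r z") auto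
    have "f xs + a \<le> f z + c" using min[rule_format, of z] a c by simp
    with fz rz c have "t * (f xs + a) \<le> t * (f y + b - \<mu> / 2 * d * (1 - t))"
      by (simp add: algebra_simps)
    then show ?thesis using t by simp
  qed
  then have "f xs + a \<le> f y + b - \<mu> / 2 * d" by (rule le_diff_of_forall_weight)
  then show ?thesis using real unfolding d_def by simp
qed (use pr in \<open>auto simp: proper_fun_def\<close>)

lemma parallel_sum_sq_le:
  fixes \<mu> \<delta> a b d :: real
  assumes "0 < \<mu>" "0 < \<delta>" "0 \<le> d" "d \<le> a + b"
  shows "\<delta> * \<mu> / (\<delta> + \<mu>) * d\<^sup>2 \<le> \<mu> * a\<^sup>2 + \<delta> * b\<^sup>2"
proof -
  have "(\<mu> + \<delta>) * (\<mu> * a\<^sup>2 + \<delta> * b\<^sup>2) - \<mu> * \<delta> * (a + b)\<^sup>2 = (\<mu> * a - \<delta> * b)\<^sup>2"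
    by (simp add: power2_eq_square algebra_simps)
  moreover have "d\<^sup>2 \<le> (a + b)\<^sup>2" using assms by (simp add: power_mono)
  ultimately have "\<mu> * \<delta> * d\<^sup>2 \<le> (\<mu> + \<delta>) * (\<mu> * a\<^sup>2 + \<delta> * b\<^sup>2)"
    using assms by (smt (verit) mult_left_mono mult_pos_pos zero_le_power2)
  then show ?thesis using assms by (simp add: field_simps)
qed

lemma moreau_quadratic_growth:
  fixes u :: "'a::real_normed_vector \<Rightarrow> ereal"
  assumes fin: "u xs = ereal Ms" and growth: "\<And>y. ereal (Ms + \<mu> / 2 * (norm (y - xs))\<^sup>2) \<le> u y"
    and "0 < \<mu>" "0 < \<delta>"
  shows "Ms + \<delta> * \<mu> / (\<delta> + \<mu>) / 2 * (norm (x - xs))\<^sup>2 \<le> moreau \<delta> u x"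
proof -
  define L where "L = Ms + \<delta> * \<mu> / (\<delta> + \<mu>) / 2 * (norm (x - xs))\<^sup>2"
  define E where "E = (INF y. u y + ereal (\<delta> / 2 * (norm (y - x))\<^sup>2))"
  have lower: "ereal L \<le> E" unfolding E_def
  proof (rule INF_greatest)
    fix y
    have "norm (x - xs) \<le> norm (y - xs) + norm (y - x)"
      using norm_triangle_ineq4[of "y - xs" "y - x"] by simp
    then have "\<delta> * \<mu> / (\<delta> + \<mu>) * (norm (x - xs))\<^sup>2 \<le> \<mu> * (norm (y - xs))\<^sup>2 + \<delta> * (norm (y - x))\<^sup>2"
      using assms(3,4) by (intro parallel_sum_sq_le) simp_all
    then have "L \<le> Ms + \<mu> / 2 * (norm (y - xs))\<^sup>2 + \<delta> / 2 * (norm (y - x))\<^sup>2"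
      using assms(3,4) unfolding L_def by (simp add: field_simps)
    then have "ereal L \<le> ereal (Ms + \<mu> / 2 * (norm (y - xs))\<^sup>2) + ereal (\<delta> / 2 * (norm (y - x))\<^sup>2)"
      by simp
    also have "\<dots> \<le> u y + ereal (\<delta> / 2 * (norm (y - x))\<^sup>2)"
      using growth by (rule add_right_mono)
    finally show "ereal L \<le> u y + ereal (\<delta> / 2 * (norm (y - x))\<^sup>2)" .
  qed
  have "E \<le> u xs + ereal (\<delta> / 2 * (norm (xs - x))\<^sup>2)"
    unfolding E_def by (rule INF_lower) simp
  then have "E \<le> ereal (Ms + \<delta> / 2 * (norm (xs - x))\<^sup>2)" using fin by simp
  with lower obtain e where "E = ereal e" "L \<le> e" by (cases E) auto
  then show ?thesis unfolding moreau_def E_def[symmetric] L_def[symmetric] by simp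
qed

lemma moreau_quadratic_growth_at_minimizer:
  fixes f :: "'a::real_normed_vector \<Rightarrow> real" and r :: "'a \<Rightarrow> ereal"
  assumes "strongly_convex \<mu> f" "convex_efun r" "proper_fun r"
    and min: "\<forall>y. ereal (f xs) + r xs \<le> ereal (f y) + r y" and "0 < \<mu>" "0 < \<delta>"
  shows "real_of_ereal (ereal (f xs) + r xs) + \<delta> * \<mu> / (\<delta> + \<mu>) / 2 * (norm (x - xs))\<^sup>2
    \<le> moreau \<delta> (\<lambda>y. ereal (f y) + r y) x"
proof -
  obtain a where a: "r xs = ereal a" using proper_sum_minimum_finite[OF assms(3) min] by blast
  have "ereal (f xs + a + \<mu> / 2 * (norm (y - xs))\<^sup>2) \<le> ereal (f y) + r y" for y
    using strongly_convex_quadratic_growth[OF assms(1-3) min a] .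
  from moreau_quadratic_growth[OF _ this assms(5,6)] show ?thesis using a by simp
qed

lemma (in prob_space) sum_integral_lin_rec_le_geometric:
  assumes "\<And>i j. i \<in> I \<Longrightarrow> integrable M (e i j)" "0 \<le> p" "p < q" "0 \<le> C"
    and "\<And>i. i \<in> I \<Longrightarrow> 0 \<le> a i" "\<And>j. (\<Sum>i\<in>I. \<integral>w. \<bar>e i j w\<bar> \<partial>M) \<le> C * q ^ j"
  shows "(\<Sum>i\<in>I. \<integral>w. lin_rec p (a i) (\<lambda>j. \<bar>e i j w\<bar>) k \<partial>M) \<le> q ^ k * ((\<Sum>i\<in>I. a i) + C / (q - p))"
proof -
  have "(\<Sum>i\<in>I. \<integral>w. lin_rec p (a i) (\<lambda>j. \<bar>e i j w\<bar>) k \<partial>M)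
      = (\<Sum>i\<in>I. lin_rec p (a i) (\<lambda>j. \<integral>w. \<bar>e i j w\<bar> \<partial>M) k)"
    using assms(1) by (intro sum.cong integral_lin_rec) auto
  also have "\<dots> = lin_rec p (\<Sum>i\<in>I. a i) (\<lambda>j. \<Sum>i\<in>I. \<integral>w. \<bar>e i j w\<bar> \<partial>M) k"
    by (rule sum_lin_rec)
  also have "\<dots> \<le> q ^ k * ((\<Sum>i\<in>I. a i) + C / (q - p))"
    using assms(2-6) by (intro lin_rec_le_geometric sum_nonneg) auto
  finally show ?thesis .
qed

lemma estimating_sequence_dist_le_lin_rec:
  fixes \<psi> :: "nat \<Rightarrow> 'a::real_normed_vector \<Rightarrow> real" and x :: "nat \<Rightarrow> 'a"
  assumes has_min: "\<And>k. \<exists>z. \<forall>y. \<psi> k z \<le> \<psi> k y"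
    and est: "\<And>k. \<psi> (Suc k) xs \<le> (1 - \<alpha>) * \<psi> k xs + \<alpha> * (Ms + \<epsilon> k)"
    and \<epsilon>\<psi>0: "\<epsilon>\<psi> 0 = 0"
    and x: "\<And>k. Mx (x k) \<le> (INF y. \<psi> k y) + \<epsilon>\<psi> k"
    and growth: "\<And>y. Ms + \<mu>M / 2 * (norm (y - xs))\<^sup>2 \<le> Mx y"
    and "0 < \<mu>M" "\<alpha> \<le> 1"
  shows "(norm (x k - xs))\<^sup>2 \<le> 2 / \<mu>M *
    lin_rec (1 - \<alpha>) (\<psi> 0 xs - Ms) (\<lambda>j. \<bar>\<epsilon>\<psi> (Suc j) - (1 - \<alpha>) * \<epsilon>\<psi> j + \<alpha> * \<epsilon> j\<bar>) k"
proof -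
  define gap where "gap k = \<psi> k xs - Ms + \<epsilon>\<psi> k" for k
  have "gap k \<le> lin_rec (1 - \<alpha>) (\<psi> 0 xs - Ms) (\<lambda>j. \<bar>\<epsilon>\<psi> (Suc j) - (1 - \<alpha>) * \<epsilon>\<psi> j + \<alpha> * \<epsilon> j\<bar>) k"
  proof (rule le_lin_rec)
    fix j
    show "gap (Suc j) \<le> (1 - \<alpha>) * gap j + \<bar>\<epsilon>\<psi> (Suc j) - (1 - \<alpha>) * \<epsilon>\<psi> j + \<alpha> * \<epsilon> j\<bar>"
      using est[of j] unfolding gap_def by (simp add: algebra_simps)
  qed (use \<epsilon>\<psi>0 \<open>\<alpha> \<le> 1\<close> in \<open>simp_all add: gap_def\<close>)
  moreover have "(INF y. \<psi> k y) \<le> \<psi> k xs"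
  proof (rule cINF_lower)
    obtain z where "\<forall>y. \<psi> k z \<le> \<psi> k y" using has_min by blast
    then show "bdd_below (range (\<psi> k))" by (auto intro: bdd_belowI)
  qed simp
  then have "\<mu>M / 2 * (norm (x k - xs))\<^sup>2 \<le> gap k"
    using x[of k] growth[of "x k"] unfolding gap_def by simp
  ultimately show ?thesis using \<open>0 < \<mu>M\<close> by (simp add: field_simps)
qed

theorem proposition5:
  fixes m :: nat and fi :: "nat \<Rightarrow> 'a::euclidean_space \<Rightarrow> real" and r :: "'a \<Rightarrow> ereal"
    and \<mu> L \<delta> :: real and xs :: 'a
    and P :: "'w measure"
    and \<alpha> c C :: real
    and \<psi> :: "nat \<Rightarrow> nat \<Rightarrow> 'w \<Rightarrow> 'a \<Rightarrow> real" and \<psi>0 :: "nat \<Rightarrow> 'a \<Rightarrow> real"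
    and \<epsilon> \<epsilon>\<psi> :: "nat \<Rightarrow> nat \<Rightarrow> 'w \<Rightarrow> real" and xt :: "nat \<Rightarrow> nat \<Rightarrow> 'w \<Rightarrow> 'a"
  defines "f \<equiv> (\<lambda>x. (1 / real m) * (\<Sum>i<m. fi i x))"
  defines "u \<equiv> (\<lambda>x. ereal (f x) + r x)"
  defines "M \<equiv> moreau \<delta> u"
  defines "Mstar \<equiv> real_of_ereal (u xs)"
  defines "\<mu>M \<equiv> \<delta> * \<mu> / (\<delta> + \<mu>)"
  defines "\<epsilon>tot \<equiv> (\<lambda>k i w. \<epsilon>\<psi> (Suc k) i w - (1 - \<alpha>) * \<epsilon>\<psi> k i w + \<alpha> * \<epsilon> k i w)"
  defines "cscvx \<equiv> (1 / real m) * (\<Sum>i<m. 2 / \<mu>M * (\<psi>0 i xs - Mstar + C / (\<alpha> * (1 - c))))"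
  assumes m_pos: "0 < m"
    and fi_C1: "\<And>i. i < m \<Longrightarrow> cont_diff (fi i)"
    and fi_convex: "\<And>i. i < m \<Longrightarrow> convex_on UNIV (fi i)"
    and f_sc: "strongly_convex \<mu> f"
    and f_smooth: "L_smooth L f"
    and r_proper: "proper_fun r" and r_closed: "closed_fun r" and r_convex: "convex_efun r"
    and xs_min: "\<forall>y. u xs \<le> u y"
    and \<delta>_pos: "0 < \<delta>"
    and \<mu>_pos: "0 < \<mu>"
    and \<alpha>: "0 < \<alpha>" "\<alpha> < 1"
    and c: "0 < c" "c < 1"
    and C: "0 \<le> C"
    and P: "prob_space P"
    and est: "AE w in P. inexact_est_seq m xs Mstar (\<lambda>k i. \<psi> k i w) (\<lambda>_. \<alpha>) (\<lambda>k i. \<epsilon> k i w)"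
    and e\<psi>0: "AE w in P. \<forall>i<m. \<epsilon>\<psi> 0 i w = 0"
    and xt_bound: "AE w in P. \<forall>k. \<forall>i<m. M (xt k i w) \<le> (INF x. \<psi> k i w x) + \<epsilon>\<psi> k i w"
    and \<psi>0_det: "\<And>w i. w \<in> space P \<Longrightarrow> i < m \<Longrightarrow> \<psi> 0 i w = \<psi>0 i"
    and int_tot: "\<And>k i. i < m \<Longrightarrow> integrable P (\<lambda>w. \<epsilon>tot k i w)"
    and int_x: "\<And>k i. i < m \<Longrightarrow> integrable P (\<lambda>w. (norm (xt k i w - xs))\<^sup>2)"
    and tot_bound: "\<And>k. (1 / real m) * (\<Sum>i<m. (\<integral>w. \<bar>\<epsilon>tot k i w\<bar> \<partial>P)) \<le> C * (1 - c * \<alpha>) ^ k"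
  shows "\<forall>k. (1 / real m) * (\<Sum>i<m. (\<integral>w. (norm (xt k i w - xs))\<^sup>2 \<partial>P)) \<le> cscvx * (1 - c * \<alpha>) ^ k"
proof -
  interpret P: prob_space P by (rule P)
  define p where "p = 1 - \<alpha>"
  define q where "q = 1 - c * \<alpha>"
  define A where "A i = \<psi>0 i xs - Mstar" for i
  define maj where "maj i k w = lin_rec p (A i) (\<lambda>j. \<bar>\<epsilon>tot j i w\<bar>) k" for i k w
  have pq: "0 \<le> p" "p < q" "q - p = \<alpha> * (1 - c)"
    using \<alpha> c by (simp_all add: p_def q_def algebra_simps)
  have \<mu>M: "0 < \<mu>M" unfolding \<mu>M_def using \<delta>_pos \<mu>_pos by simp
  have growth: "Mstar + \<mu>M / 2 * (norm (x - xs))\<^sup>2 \<le> M x" for x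
    using moreau_quadratic_growth_at_minimizer[OF f_sc r_convex r_proper _ \<mu>_pos \<delta>_pos] xs_min
    unfolding M_def Mstar_def \<mu>M_def u_def by blast
  have pathwise: "AE w in P. \<forall>i<m. \<forall>k. (norm (xt k i w - xs))\<^sup>2 \<le> 2 / \<mu>M * maj i k w"
    using AE_space est e\<psi>0 xt_bound
  proof eventually_elim
    case (elim w)
    show ?case
    proof (intro allI impI)
      fix i k assume "i < m"
      with elim show "(norm (xt k i w - xs))\<^sup>2 \<le> 2 / \<mu>M * maj i k w"
        unfolding maj_def A_def p_def \<epsilon>tot_def inexact_est_seq_def
        using estimating_sequence_dist_le_lin_rec[OF _ _ _ _ growth \<mu>M, where \<psi>="\<lambda>k. \<psi> k i w" and \<alpha>=\<alpha>
            and \<epsilon>="\<lambda>k. \<epsilon> k i w" and \<epsilon>\<psi>="\<lambda>k. \<epsilon>\<psi> k i w" and x="\<lambda>k. xt k i w"]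
          \<psi>0_det[of w i] \<alpha> by auto
    qed
  qed
  have A_nonneg: "0 \<le> A i" if "i < m" for i
  proof -
    obtain w where "\<forall>i<m. \<forall>k. (norm (xt k i w - xs))\<^sup>2 \<le> 2 / \<mu>M * maj i k w"
      using eventually_happens[OF pathwise] P.ae_filter_bot by blast
    then have "(norm (xt 0 i w - xs))\<^sup>2 \<le> 2 / \<mu>M * A i"
      using that unfolding maj_def by (metis lin_rec.simps(1))
    then have "0 \<le> 2 / \<mu>M * A i" using zero_le_power2 order_trans by blast
    then show ?thesis using \<mu>M by (simp add: zero_le_divide_iff)
  qed
  show ?thesis
  proof
    fix k
    have "(\<integral>w. (norm (xt k i w - xs))\<^sup>2 \<partial>P) \<le> 2 / \<mu>M * (\<integral>w. maj i k w \<partial>P)" if "i < m" for i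
      using that int_x int_tot pathwise unfolding maj_def
      by (subst integral_mult_right_zero[symmetric])
        (intro integral_mono_AE P.integrable_lin_rec integrable_mult_right integrable_abs; auto elim: eventually_mono)
    then have "(1 / real m) * (\<Sum>i<m. (\<integral>w. (norm (xt k i w - xs))\<^sup>2 \<partial>P))
        \<le> (1 / real m) * (\<Sum>i<m. 2 / \<mu>M * (\<integral>w. maj i k w \<partial>P))"
      by (intro mult_left_mono sum_mono) simp_all
    also have "\<dots> = 2 / \<mu>M * ((1 / real m) * (\<Sum>i<m. \<integral>w. maj i k w \<partial>P))"
      by (simp add: sum_distrib_left mult_ac)
    also have "\<dots> \<le> 2 / \<mu>M * ((1 / real m) * (q ^ k * ((\<Sum>i<m. A i) + real m * C / (q - p))))"
      using pq C int_tot A_nonneg tot_bound m_pos \<mu>M unfolding maj_def q_def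
      by (intro mult_left_mono P.sum_integral_lin_rec_le_geometric) (auto simp: field_simps)
    also have "\<dots> = cscvx * q ^ k"
    proof -
      define K where "K = C / (q - p)"
      have "cscvx = (1 / real m) * (\<Sum>i<m. 2 / \<mu>M * (A i + K))"
        unfolding cscvx_def A_def K_def pq(3) by simp
      also have "(\<Sum>i<m. 2 / \<mu>M * (A i + K)) = 2 / \<mu>M * ((\<Sum>i<m. A i) + real m * K)"
        by (simp only: sum_distrib_left[symmetric] sum.distrib sum_constant card_lessThan)
      finally show ?thesis unfolding K_def by (simp add: mult_ac)
    qed
    finally show "(1 / real m) * (\<Sum>i<m. (\<integral>w. (norm (xt k i w - xs))\<^sup>2 \<partial>P)) \<le> cscvx * (1 - c * \<alpha>) ^ k"
      unfolding q_def .
  qed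
qed

end
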